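(* Fix constants $Q>0$, $T_1>0$, $T_2>0$, $0<\mu_i<\mu_o$, $0<R_1(0)<R_2(0)$, a positive integer $n$ and a time $\tau\ge0$. Put $R_0^2(\tau)=Q\tau/\pi$, $R_1^2(\tau)=Q\tau/\pi+R_1^2(0)$, $R_2^2(\tau)=Q\tau/\pi+R_2^2(0)$, $\zeta_1=R_1^2(0)/R_2^2(0)$. Let $\mu\in C^1([\zeta_1,1])$ satisfy $\mu_i<\mu(\zeta)<\mu_o$ on $[\zeta_1,1]$, and define $$F_1=\frac{Qn}{2\pi R_1^2(\tau)}\big(\mu(\zeta_1)-\mu_i\big)-T_1\frac{n^3-n}{R_1^3(\tau)},\qquad F_2=\frac{Qn}{2\pi R_2^2(\tau)}\big(\mu_o-\mu(1)\big)-T_2\frac{n^3-n}{R_2^3(\tau)}.$$ Suppose $\sigma\neq0$ and a nontrivial $f$ satisfy $$\Big(\big(\zeta R_2^2(0)+R_0^2(\tau)\big)\mu f'\Big)'-\frac{n^2R_2^4(0)}{4(\zeta R_2^2(0)+R_0^2(\tau))}\mu f=-\frac{Qn^2R_2^2(0)}{4\pi(\zeta R_2^2(0)+R_0^2(\tau))}\frac{1}{\sigma}\mu'f,\quad \zeta_1<\zeta<1,$$ $$\frac{2R_1^2(\tau)}{nR_2^2(0)}\mu(\zeta_1)f'(\zeta_1)=\Big(\mu_i-\frac{F_1}{\sigma}\Big)f(\zeta_1),\qquad -\frac{2R_2^2(\tau)}{nR_2^2(0)}\mu(1)f'(1)=\Big(\mu_o-\frac{F_2}{\sigma}\Big)f(1).$$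 Then $\sigma$ is real. Moreover, if $\sigma>0$, then $$\sigma<\max\left\{\frac{Qn}{2\pi R_1^2(\tau)}\frac{\mu(\zeta_1)-\mu_i}{\mu_i}-\frac{T_1}{\mu_i}\frac{n^3-n}{R_1^3(\tau)},\ \frac{Qn}{2\pi R_2^2(\tau)}\frac{\mu_o-\mu(1)}{\mu_o}-\frac{T_2}{\mu_o}\frac{n^3-n}{R_2^3(\tau)},\ \frac{Q}{\pi R_2^2(0)}\frac{1}{\mu_i}\sup_{\zeta\in(\zeta_1,1)}\mu'(\zeta)\right\},$$ and consequently, independently of $n$, $$\sigma<\max\left\{\frac{2T_1}{\mu_iR_1^3(\tau)}\Big(\frac{QR_1(\tau)}{6\pi T_1}(\mu(\zeta_1)-\mu_i)+\frac13\Big)^{3/2},\ \frac{2T_2}{\mu_oR_2^3(\tau)}\Big(\frac{QR_2(\tau)}{6\pi T_2}(\mu_o-\mu(1))+\frac13\Big)^{3/2},\ \frac{Q}{\pi R_2^2(0)}\frac{1}{\mu_i}\sup_{\zeta\in(\zeta_1,1)}\mu'(\zeta)\right\}.$$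
   Context: This is the eigenvalue problem for the growth rate $\sigma$ of a disturbance with angular wave number $n$ in the linear stability analysis (under a quasi-steady-state approximation) of three-layer radial Hele-Shaw flow, written in the transformed coordinate $\zeta=(r^2-R_0^2(\tau))/R_2^2(0)$ in which the interfaces are at $\zeta=\zeta_1$ and $\zeta=1$; $\mu_i,\mu_o$ are the constant inner/outer viscosities, $\mu(\zeta)$ the middle-layer viscous profile, $T_1,T_2$ the interfacial tensions and $Q$ the injection rate. *)

theory Defs
  imports "HOL-Analysis.Analysis"
begin

definition R0sq :: "real \<Rightarrow> real \<Rightarrow> real" where
  "R0sq Q \<tau> = Q * \<tau> / pi"

definition Rsq :: "real \<Rightarrow> real \<Rightarrow> real \<Rightarrow> real" where
  "Rsq Q \<tau> Rinit = Q * \<tau> / pi + Rinit\<^sup>2"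

definition zeta1 :: "real \<Rightarrow> real \<Rightarrow> real" where
  "zeta1 R10 R20 = R10\<^sup>2 / R20\<^sup>2"

end

(*
  Multiplying the equation by the conjugate of f and integrating by parts, the interface
  conditions turn the boundary terms into multiples of |f|^2 at the interfaces.  The result is
  sigma * D = N with a real numerator N and a positive real denominator D, so sigma = N / D is real.
  If sigma > 0 and M is the maximum of the three bounds, then M > 0 and N < M * D holds termwise:
  F_1 <= M mu_i, F_2 <= M mu_o, and Q mu' < M pi R_2(0)^2 mu pointwise because mu > mu_i.
  The n-independent bound follows from 3 y^2 x - x^3 <= 2 y^3 for x, y >= 0.
*)

theory Submission
  imports Defs
begin

lemma vector_derivative_eq_continuous_extension:
  fixes f f' F :: "real \<Rightarrow> 'a::banach"
  assumes "a < b"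
    and f: "\<And>x. x \<in> {a..b} \<Longrightarrow> (f has_vector_derivative f' x) (at x within {a..b})"
    and F: "continuous_on {a..b} F"
    and eq: "\<And>x. x \<in> {a<..<b} \<Longrightarrow> f' x = F x"
    and x: "x \<in> {a..b}"
  shows "f' x = F x"
proof -
  have f_cont: "continuous_on {a..b} f"
    using f continuous_on_eq_continuous_within has_vector_derivative_continuous by blast
  have f_eq: "f y = f a + integral {a..y} F" if y: "y \<in> {a..b}" for y
  proof -
    have "(F has_integral f y - f a) {a..y}"
    proof (rule fundamental_theorem_of_calculus_interior)
      show "a \<le> y" using y by simp
      show "continuous_on {a..y} f" using f_cont y by (auto intro: continuous_on_subset)
      fix t assume t: "t \<in> {a<..<y}"
      then have "(f has_vector_derivative f' t) (at t)"
        using f[of t] y at_within_interior[of t "{a..b}"] by auto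
      then show "(f has_vector_derivative F t) (at t)" using eq t y by auto
    qed
    then show ?thesis by (simp add: integral_unique)
  qed
  have D: "((\<lambda>y. f a + integral {a..y} F) has_vector_derivative F x) (at x within {a..b})"
    using has_vector_derivative_add[OF has_vector_derivative_const integral_has_vector_derivative[OF F x]]
    by simp
  have "(f has_vector_derivative F x) (at x within {a..b})"
    by (rule has_vector_derivative_transform[OF x _ D]) (rule f_eq)
  then show ?thesis
    using vector_derivative_unique_within_closed_interval[OF \<open>a < b\<close>] f[OF x] x by simp
qed

lemma interior_derivative_continuous_extension:
  fixes g G :: "real \<Rightarrow> 'a::banach"
  assumes "a < b" and G: "continuous_on {a..b} G"
    and g: "\<And>x. x \<in> {a<..<b} \<Longrightarrow> (g has_vector_derivative G x) (at x)"
  obtains gh where "continuous_on {a..b} gh" "\<And>x. x \<in> {a<..<b} \<Longrightarrow> g x = gh x"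
proof -
  define c where "c = (a + b) / 2"
  have c: "c \<in> {a<..<b}" using \<open>a < b\<close> by (simp add: c_def)
  have "g x - integral {a..x} G = g c - integral {a..c} G" if x: "x \<in> {a<..<b}" for x
  proof (rule has_derivative_zero_unique_connected[OF open_greaterThanLessThan
        connected_Ioo _ x c])
    fix y assume y: "y \<in> {a<..<b}"
    have "((\<lambda>u. integral {a..u} G) has_vector_derivative G y) (at y)"
      using integral_has_vector_derivative[OF G, of y] y at_within_interior[of y "{a..b}"] by auto
    from has_vector_derivative_diff[OF g[OF y] this]
    show "((\<lambda>u. g u - integral {a..u} G) has_derivative (\<lambda>h. 0)) (at y)"
      by (simp add: has_vector_derivative_def)
  qed
  then show ?thesis
    by (intro that[of "\<lambda>x. g c - integral {a..c} G + integral {a..x} G"])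
      (auto intro!: continuous_intros indefinite_integral_continuous_1
        integrable_continuous_interval G simp: algebra_simps)
qed

lemma has_integral_pos_continuous:
  fixes \<phi> :: "real \<Rightarrow> real"
  assumes "a < b" and "continuous_on {a..b} \<phi>" and "\<And>x. x \<in> {a..b} \<Longrightarrow> 0 \<le> \<phi> x"
    and "z \<in> {a..b}" "\<phi> z \<noteq> 0" and I: "(\<phi> has_integral I) {a..b}"
  shows "0 < I"
proof -
  have "0 \<le> I" using has_integral_nonneg[OF I] assms(3) by blast
  moreover have "integral {a..b} \<phi> \<noteq> 0"
    using integral_cbox_eq_0_iff[of a b \<phi>] assms by auto
  ultimately show ?thesis using I by (auto simp: integral_unique)
qed

lemma continuous_on_le_SUP_greaterThanLessThan:
  fixes g :: "real \<Rightarrow> real"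
  assumes "a < b" and g: "continuous_on {a..b} g" and x: "x \<in> {a..b}"
  shows "g x \<le> (SUP z\<in>{a<..<b}. g z)"
proof (rule continuous_le_on_closure[where S = "{a<..<b}" and f = g and x = x])
  have "bdd_above (g ` {a..b})"
    using compact_continuous_image[OF g compact_Icc] by (simp add: bounded_imp_bdd_above compact_imp_bounded)
  then have "bdd_above (g ` {a<..<b})" by (rule bdd_above_mono) auto
  then show "\<And>y. y \<in> {a<..<b} \<Longrightarrow> g y \<le> (SUP z\<in>{a<..<b}. g z)" by (simp add: cSUP_upper)
qed (use assms in auto)

lemma cubic_le_double_cube:
  fixes x y :: real
  assumes "0 \<le> x" "0 \<le> y"
  shows "3 * y\<^sup>2 * x - x ^ 3 \<le> 2 * y ^ 3"
proof -
  have "0 \<le> (x - y)\<^sup>2 * (x + 2 * y)" using assms by simp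
  also have "\<dots> = 2 * y ^ 3 - (3 * y\<^sup>2 * x - x ^ 3)" by algebra
  finally show ?thesis by simp
qed

lemma powr_three_halves: "0 \<le> z \<Longrightarrow> z powr (3 / 2) = sqrt z ^ 3"
  by (cases "z = 0") (simp_all add: powr_half_sqrt[symmetric] powr_realpow[symmetric] powr_powr)

lemma interfacial_rate_le_max_over_wavenumbers:
  fixes Q T S \<Delta> m x :: real
  assumes "0 \<le> Q" "0 < S" "0 < T" "0 \<le> \<Delta>" "0 < m" "0 \<le> x"
  shows "Q * x / (2 * pi * S) * \<Delta> / m - T / m * (x ^ 3 - x) / sqrt S ^ 3
     \<le> 2 * T / (m * sqrt S ^ 3) * (Q * sqrt S / (6 * pi * T) * \<Delta> + 1 / 3) powr (3 / 2)"
proof -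
  define R where "R = sqrt S"
  define c where "c = Q * R / (6 * pi * T) * \<Delta>"
  define y where "y = sqrt (c + 1 / 3)"
  have R: "0 < R" "R\<^sup>2 = S" using assms by (simp_all add: R_def)
  have c: "0 \<le> c" using assms R by (simp add: c_def)
  have y: "0 \<le> y" "y\<^sup>2 = c + 1 / 3" using c by (simp_all add: y_def)
  have "Q * x / (2 * pi * S) * \<Delta> / m - T / m * (x ^ 3 - x) / R ^ 3
      = T / (m * R ^ 3) * (3 * y\<^sup>2 * x - x ^ 3)"
    unfolding y(2) c_def using assms R by (simp add: field_simps power2_eq_square power3_eq_cube)
  also have "\<dots> \<le> T / (m * R ^ 3) * (2 * y ^ 3)"
    using cubic_le_double_cube[OF assms(6) y(1)] assms R by (intro mult_left_mono) auto
  also have "\<dots> = 2 * T / (m * R ^ 3) * (c + 1 / 3) powr (3 / 2)"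
    using c by (simp add: y_def powr_three_halves)
  finally show ?thesis unfolding R_def c_def .
qed

lemma integrable_weighted_square:
  fixes w :: "real \<Rightarrow> real" and g :: "real \<Rightarrow> complex"
  shows "continuous_on {a..b} w \<Longrightarrow> continuous_on {a..b} g \<Longrightarrow>
    (\<lambda>x. w x * (cmod (g x))\<^sup>2) integrable_on {a..b}"
  by (intro integrable_continuous_interval continuous_intros)

lemma has_integral_of_real_continuous:
  fixes u :: "real \<Rightarrow> real"
  shows "continuous_on {a..b} u \<Longrightarrow>
    ((\<lambda>x. complex_of_real (u x)) has_integral of_real (integral {a..b} u)) {a..b}"
  by (intro has_integral_of_real integrable_integral integrable_continuous_interval)

locale robin_eigenproblem =
  fixes a b :: real and q p r :: "real \<Rightarrow> real" and \<alpha>0 \<beta>0 \<alpha>1 \<beta>1 :: real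
    and \<sigma> :: complex and f f' :: "real \<Rightarrow> complex"
  assumes a_less_b: "a < b"
    and q_cont: "continuous_on {a..b} q" and q_pos: "\<And>x. x \<in> {a..b} \<Longrightarrow> 0 < q x"
    and p_cont: "continuous_on {a..b} p" and p_pos: "\<And>x. x \<in> {a..b} \<Longrightarrow> 0 < p x"
    and r_cont: "continuous_on {a..b} r"
    and \<alpha>0_nonneg: "0 \<le> \<alpha>0" and \<alpha>1_nonneg: "0 \<le> \<alpha>1"
    and \<sigma>_nonzero: "\<sigma> \<noteq> 0"
    and f_deriv: "\<And>x. x \<in> {a..b} \<Longrightarrow> (f has_vector_derivative f' x) (at x within {a..b})"
    and f_nontrivial: "\<exists>x\<in>{a..b}. f x \<noteq> 0"
    and flux_deriv: "\<And>x. x \<in> {a<..<b} \<Longrightarrow>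
      ((\<lambda>x. of_real (q x) * f' x) has_vector_derivative (of_real (p x) - of_real (r x) / \<sigma>) * f x) (at x)"
    and left_bc: "of_real (q a) * f' a = (of_real \<alpha>0 - of_real \<beta>0 / \<sigma>) * f a"
    and right_bc: "- of_real (q b) * f' b = (of_real \<alpha>1 - of_real \<beta>1 / \<sigma>) * f b"
begin

definition rayleigh_num :: real where
  "rayleigh_num = \<beta>0 * (cmod (f a))\<^sup>2 + \<beta>1 * (cmod (f b))\<^sup>2
     + integral {a..b} (\<lambda>x. r x * (cmod (f x))\<^sup>2)"

definition rayleigh_den :: real where
  "rayleigh_den = \<alpha>0 * (cmod (f a))\<^sup>2 + \<alpha>1 * (cmod (f b))\<^sup>2
     + integral {a..b} (\<lambda>x. q x * (cmod (f' x))\<^sup>2) + integral {a..b} (\<lambda>x. p x * (cmod (f x))\<^sup>2)"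

lemma f_cont: "continuous_on {a..b} f"
  using f_deriv continuous_on_eq_continuous_within has_vector_derivative_continuous by blast

lemma f_deriv_at: "x \<in> {a<..<b} \<Longrightarrow> (f has_vector_derivative f' x) (at x)"
  using f_deriv[of x] at_within_interior[of x "{a..b}"] by auto

(* The equation only controls the flux q f' in the interior, so the continuity of f' up to the
   boundary, needed to integrate by parts, is recovered from the integrated equation. *)

lemma f'_cont: "continuous_on {a..b} f'"
proof -
  have "continuous_on {a..b} (\<lambda>x. (of_real (p x) - of_real (r x) / \<sigma>) * f x)"
    using \<sigma>_nonzero by (intro continuous_intros p_cont r_cont f_cont) auto
  then obtain g where g: "continuous_on {a..b} g"
    and flux_eq: "\<And>x. x \<in> {a<..<b} \<Longrightarrow> of_real (q x) * f' x = g x"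
    using interior_derivative_continuous_extension[OF a_less_b _ flux_deriv] by blast
  have g_div_q: "continuous_on {a..b} (\<lambda>x. g x / of_real (q x))"
    using q_pos by (intro continuous_intros g q_cont) force
  have "f' x = g x / of_real (q x)" if "x \<in> {a..b}" for x
  proof (rule vector_derivative_eq_continuous_extension[OF a_less_b f_deriv g_div_q _ that])
    fix y assume "y \<in> {a<..<b}"
    then show "f' y = g y / of_real (q y)" using flux_eq[of y] q_pos[of y] by (auto simp: field_simps)
  qed
  then show ?thesis using continuous_on_eq[OF g_div_q] by metis
qed

lemma green_identity:
  "of_real (q b) * f' b * cnj (f b) - of_real (q a) * f' a * cnj (f a)
    = of_real (integral {a..b} (\<lambda>x. q x * (cmod (f' x))\<^sup>2))
      + of_real (integral {a..b} (\<lambda>x. p x * (cmod (f x))\<^sup>2))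
      - of_real (integral {a..b} (\<lambda>x. r x * (cmod (f x))\<^sup>2)) / \<sigma>"
proof -
  define h where "h x = of_real (q x) * f' x * cnj (f x)" for x
  define h' where "h' x = of_real (q x * (cmod (f' x))\<^sup>2) + of_real (p x * (cmod (f x))\<^sup>2)
    - of_real (r x * (cmod (f x))\<^sup>2) / \<sigma>" for x
  have "(h has_vector_derivative h' x) (at x)" if x: "x \<in> {a<..<b}" for x
    using has_vector_derivative_mult[OF flux_deriv[OF x] has_vector_derivative_cnj[OF f_deriv_at[OF x]]]
    unfolding h_def h'_def
    by (rule has_vector_derivative_eq_rhs) (simp add: complex_norm_square algebra_simps del: of_real_power)
  moreover have "continuous_on {a..b} h"
    unfolding h_def by (intro continuous_intros q_cont f_cont f'_cont)
  ultimately have "(h' has_integral h b - h a) {a..b}"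
    using a_less_b by (intro fundamental_theorem_of_calculus_interior) auto
  moreover have "(h' has_integral
      of_real (integral {a..b} (\<lambda>x. q x * (cmod (f' x))\<^sup>2))
      + of_real (integral {a..b} (\<lambda>x. p x * (cmod (f x))\<^sup>2))
      - of_real (integral {a..b} (\<lambda>x. r x * (cmod (f x))\<^sup>2)) / \<sigma>) {a..b}"
    unfolding h'_def
    by (intro has_integral_add has_integral_diff has_integral_divide has_integral_of_real_continuous
        continuous_intros q_cont p_cont r_cont f_cont f'_cont)
  ultimately show ?thesis unfolding h_def using has_integral_unique by blast
qed

lemma rayleigh_den_pos: "0 < rayleigh_den"
proof -
  obtain z where z: "z \<in> {a..b}" "f z \<noteq> 0" using f_nontrivial by blast
  have "0 < integral {a..b} (\<lambda>x. p x * (cmod (f x))\<^sup>2)"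
  proof (rule has_integral_pos_continuous[of a b "\<lambda>x. p x * (cmod (f x))\<^sup>2" z])
    show "0 \<le> p x * (cmod (f x))\<^sup>2" if "x \<in> {a..b}" for x
      using p_pos[OF that] by simp
    show "p z * (cmod (f z))\<^sup>2 \<noteq> 0"
      using p_pos[OF z(1)] z(2) by simp
  qed (use a_less_b z(1) in \<open>auto intro!: continuous_intros p_cont f_cont integrable_integral
      integrable_weighted_square\<close>)
  moreover have "0 \<le> integral {a..b} (\<lambda>x. q x * (cmod (f' x))\<^sup>2)"
    using q_pos by (intro integral_nonneg integrable_weighted_square q_cont f'_cont) (simp add: less_imp_le)
  ultimately show ?thesis
    unfolding rayleigh_den_def using \<alpha>0_nonneg \<alpha>1_nonneg by (simp add: add_nonneg_pos)
qed

lemma eigenvalue_eq_rayleigh_quotient: "\<sigma> = of_real (rayleigh_num / rayleigh_den)"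
proof -
  have right: "of_real (q b) * f' b * cnj (f b) = - (of_real \<alpha>1 - of_real \<beta>1 / \<sigma>) * of_real ((cmod (f b))\<^sup>2)"
    using arg_cong[OF right_bc, of "\<lambda>z. - z * cnj (f b)"]
    by (simp add: complex_norm_square algebra_simps del: of_real_power)
  have left: "of_real (q a) * f' a * cnj (f a) = (of_real \<alpha>0 - of_real \<beta>0 / \<sigma>) * of_real ((cmod (f a))\<^sup>2)"
    using arg_cong[OF left_bc, of "\<lambda>z. z * cnj (f a)"]
    by (simp add: complex_norm_square algebra_simps del: of_real_power)
  have "\<sigma> * inverse \<sigma> = 1" using \<sigma>_nonzero by simp
  then have "\<sigma> * of_real rayleigh_den = of_real rayleigh_num"
    using green_identity unfolding right left rayleigh_num_def rayleigh_den_def divide_inverse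
      of_real_add of_real_mult by algebra
  then show ?thesis
    using rayleigh_den_pos by (simp add: field_simps)
qed

lemma eigenvalue_real: "Im \<sigma> = 0"
  by (subst eigenvalue_eq_rayleigh_quotient) simp

lemma eigenvalue_less:
  assumes M: "0 < M" and "\<beta>0 \<le> M * \<alpha>0" "\<beta>1 \<le> M * \<alpha>1"
    and r_less: "\<And>x. x \<in> {a..b} \<Longrightarrow> r x < M * p x"
  shows "Re \<sigma> < M"
proof -
  obtain z where z: "z \<in> {a..b}" "f z \<noteq> 0" using f_nontrivial by blast
  define \<phi> where "\<phi> x = M * (p x * (cmod (f x))\<^sup>2) - r x * (cmod (f x))\<^sup>2" for x
  have \<phi>_integral: "(\<phi> has_integral M * integral {a..b} (\<lambda>x. p x * (cmod (f x))\<^sup>2)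
      - integral {a..b} (\<lambda>x. r x * (cmod (f x))\<^sup>2)) {a..b}"
    unfolding \<phi>_def by (intro has_integral_diff has_integral_mult_right integrable_integral
        integrable_weighted_square p_cont r_cont f_cont)
  have "0 < M * integral {a..b} (\<lambda>x. p x * (cmod (f x))\<^sup>2)
      - integral {a..b} (\<lambda>x. r x * (cmod (f x))\<^sup>2)"
  proof (rule has_integral_pos_continuous[OF a_less_b _ _ z(1) _ \<phi>_integral])
    show "continuous_on {a..b} \<phi>"
      unfolding \<phi>_def by (intro continuous_intros p_cont r_cont f_cont)
    have \<phi>_eq: "\<phi> x = (M * p x - r x) * (cmod (f x))\<^sup>2" for x
      by (simp add: \<phi>_def algebra_simps)
    then show "0 \<le> \<phi> x" if "x \<in> {a..b}" for x
      using r_less[OF that] by simp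
    show "\<phi> z \<noteq> 0"
      using r_less[OF z(1)] z(2) \<phi>_eq[of z] by simp
  qed
  moreover have "0 \<le> M * integral {a..b} (\<lambda>x. q x * (cmod (f' x))\<^sup>2)"
    using q_pos M by (intro mult_nonneg_nonneg integral_nonneg integrable_weighted_square q_cont f'_cont)
      (auto simp: less_imp_le)
  moreover have "\<beta>0 * (cmod (f a))\<^sup>2 \<le> M * \<alpha>0 * (cmod (f a))\<^sup>2"
    and "\<beta>1 * (cmod (f b))\<^sup>2 \<le> M * \<alpha>1 * (cmod (f b))\<^sup>2"
    using assms by (simp_all add: mult_right_mono)
  ultimately have "rayleigh_num < M * rayleigh_den"
    unfolding rayleigh_num_def rayleigh_den_def by (simp add: algebra_simps)
  then show ?thesis
    using rayleigh_den_pos by (subst eigenvalue_eq_rayleigh_quotient) (simp add: pos_divide_less_eq)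
qed

lemma eigenvalue_nonpos:
  assumes "\<beta>0 \<le> 0" "\<beta>1 \<le> 0" and r_nonpos: "\<And>x. x \<in> {a..b} \<Longrightarrow> r x \<le> 0"
  shows "Re \<sigma> \<le> 0"
proof -
  have "integral {a..b} (\<lambda>x. r x * (cmod (f x))\<^sup>2) \<le> integral {a..b} (\<lambda>x. 0)"
    using r_nonpos
    by (intro integral_le integrable_weighted_square r_cont f_cont) (auto simp: mult_nonpos_nonneg)
  then have "rayleigh_num \<le> 0"
    unfolding rayleigh_num_def using assms by (simp add: add_nonpos_nonpos mult_nonpos_nonneg)
  then show ?thesis
    using rayleigh_den_pos by (subst eigenvalue_eq_rayleigh_quotient) (simp add: divide_nonpos_pos)
qed

end

locale three_layer_eigenproblem =
  fixes Q T1 T2 \<mu>i \<mu>o R10 R20 \<tau> :: real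
    and n :: nat
    and \<mu> \<mu>' :: "real \<Rightarrow> real"
    and f f' :: "real \<Rightarrow> complex"
    and \<sigma> :: complex
    and F1 F2 :: real
  assumes hQ: "Q > 0" and hT1: "T1 > 0" and hT2: "T2 > 0"
    and hmu: "0 < \<mu>i" "\<mu>i < \<mu>o"
    and hR: "0 < R10" "R10 < R20"
    and hn: "n > 0"
    and htau: "\<tau> \<ge> 0"
    and F1_def: "F1 = Q * real n / (2 * pi * Rsq Q \<tau> R10) * (\<mu> (zeta1 R10 R20) - \<mu>i)
               - T1 * (real n ^ 3 - real n) / sqrt (Rsq Q \<tau> R10) ^ 3"
    and F2_def: "F2 = Q * real n / (2 * pi * Rsq Q \<tau> R20) * (\<mu>o - \<mu> 1)
               - T2 * (real n ^ 3 - real n) / sqrt (Rsq Q \<tau> R20) ^ 3"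
    and mu_deriv: "\<And>z. z \<in> {zeta1 R10 R20..1} \<Longrightarrow> (\<mu> has_real_derivative \<mu>' z) (at z within {zeta1 R10 R20..1})"
    and mu'_cont: "continuous_on {zeta1 R10 R20..1} \<mu>'"
    and mu_bounds: "\<And>z. z \<in> {zeta1 R10 R20..1} \<Longrightarrow> \<mu>i < \<mu> z \<and> \<mu> z < \<mu>o"
    and sigma_nz: "\<sigma> \<noteq> 0"
    and f_nontriv: "\<exists>z\<in>{zeta1 R10 R20..1}. f z \<noteq> 0"
    and f_deriv: "\<And>z. z \<in> {zeta1 R10 R20..1} \<Longrightarrow> (f has_vector_derivative f' z) (at z within {zeta1 R10 R20..1})"
    and ode: "\<And>z. z \<in> {zeta1 R10 R20<..<1} \<Longrightarrow>
        ((\<lambda>x. complex_of_real ((x * R20\<^sup>2 + R0sq Q \<tau>) * \<mu> x) * f' x) has_vector_derivative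
          (complex_of_real (real n ^ 2 * R20 ^ 4 / (4 * (z * R20\<^sup>2 + R0sq Q \<tau>)) * \<mu> z) * f z
           - complex_of_real (Q * real n ^ 2 * R20\<^sup>2 / (4 * pi * (z * R20\<^sup>2 + R0sq Q \<tau>)))
               * (1 / \<sigma>) * complex_of_real (\<mu>' z) * f z)) (at z)"
    and bc1: "complex_of_real (2 * Rsq Q \<tau> R10 / (real n * R20\<^sup>2) * \<mu> (zeta1 R10 R20)) * f' (zeta1 R10 R20)
              = (complex_of_real \<mu>i - complex_of_real F1 / \<sigma>) * f (zeta1 R10 R20)"
    and bc2: "- complex_of_real (2 * Rsq Q \<tau> R20 / (real n * R20\<^sup>2) * \<mu> 1) * f' 1
              = (complex_of_real \<mu>o - complex_of_real F2 / \<sigma>) * f 1"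
begin

definition P :: "real \<Rightarrow> real" where
  "P x = x * R20\<^sup>2 + R0sq Q \<tau>"

definition K :: real where
  "K = real n * R20\<^sup>2 / 2"

lemma zeta1_pos: "0 < zeta1 R10 R20"
  using hR by (simp add: zeta1_def)

lemma zeta1_less_1: "zeta1 R10 R20 < 1"
  using hR by (simp add: zeta1_def power_strict_mono)

lemma P_pos: "x \<in> {zeta1 R10 R20..1} \<Longrightarrow> 0 < P x"
  using zeta1_pos hR hQ htau by (auto simp: P_def R0sq_def intro!: add_pos_nonneg)

lemma P_zeta1: "P (zeta1 R10 R20) = Rsq Q \<tau> R10"
  using hR by (simp add: P_def zeta1_def Rsq_def R0sq_def)

lemma P_1: "P 1 = Rsq Q \<tau> R20"
  by (simp add: P_def Rsq_def R0sq_def)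

lemma K_pos: "0 < K"
  using hn hR by (simp add: K_def)

lemma mu_cont: "continuous_on {zeta1 R10 R20..1} \<mu>"
  using mu_deriv continuous_on_eq_continuous_within DERIV_continuous by blast

lemma P_cont: "continuous_on S P"
  unfolding P_def by (intro continuous_intros)

(* K = n R20^2 / 2 clears the factor 2 R_j^2 / (n R20^2) of the interface conditions,
   since P equals R_j^2 at the interfaces. *)
sublocale robin: robin_eigenproblem "zeta1 R10 R20" 1 "\<lambda>x. P x * \<mu> x"
  "\<lambda>x. real n ^ 2 * R20 ^ 4 / (4 * P x) * \<mu> x" "\<lambda>x. Q * real n ^ 2 * R20\<^sup>2 / (4 * pi * P x) * \<mu>' x"
  "K * \<mu>i" "K * F1" "K * \<mu>o" "K * F2" \<sigma> f f'
proof
  show "continuous_on {zeta1 R10 R20..1} (\<lambda>x. P x * \<mu> x)"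
    and "continuous_on {zeta1 R10 R20..1} (\<lambda>x. real n ^ 2 * R20 ^ 4 / (4 * P x) * \<mu> x)"
    and "continuous_on {zeta1 R10 R20..1} (\<lambda>x. Q * real n ^ 2 * R20\<^sup>2 / (4 * pi * P x) * \<mu>' x)"
    using P_pos by (auto intro!: continuous_intros P_cont mu_cont mu'_cont dest: P_pos)
  show "0 < P x * \<mu> x" and "0 < real n ^ 2 * R20 ^ 4 / (4 * P x) * \<mu> x" if "x \<in> {zeta1 R10 R20..1}" for x
    using P_pos[OF that] mu_bounds[OF that] hmu hn hR by auto
  show "((\<lambda>x. of_real (P x * \<mu> x) * f' x) has_vector_derivative
      (of_real (real n ^ 2 * R20 ^ 4 / (4 * P x) * \<mu> x)
       - of_real (Q * real n ^ 2 * R20\<^sup>2 / (4 * pi * P x) * \<mu>' x) / \<sigma>) * f x) (at x)"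
    if "x \<in> {zeta1 R10 R20<..<1}" for x
    unfolding P_def by (rule has_vector_derivative_eq_rhs[OF ode[OF that]]) (simp add: algebra_simps)
  have "of_real (P (zeta1 R10 R20) * \<mu> (zeta1 R10 R20)) * f' (zeta1 R10 R20)
      = of_real K * (of_real (2 * Rsq Q \<tau> R10 / (real n * R20\<^sup>2) * \<mu> (zeta1 R10 R20)) * f' (zeta1 R10 R20))"
    using hn hR by (simp add: P_zeta1 K_def field_simps)
  then show "of_real (P (zeta1 R10 R20) * \<mu> (zeta1 R10 R20)) * f' (zeta1 R10 R20)
      = (of_real (K * \<mu>i) - of_real (K * F1) / \<sigma>) * f (zeta1 R10 R20)"
    unfolding bc1 by (simp add: algebra_simps)
  have "- of_real (P 1 * \<mu> 1) * f' 1
      = of_real K * (- of_real (2 * Rsq Q \<tau> R20 / (real n * R20\<^sup>2) * \<mu> 1) * f' 1)"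
    using hn hR by (simp add: P_1 K_def field_simps)
  then show "- of_real (P 1 * \<mu> 1) * f' 1 = (of_real (K * \<mu>o) - of_real (K * F2) / \<sigma>) * f 1"
    unfolding bc2 by (simp add: algebra_simps)
qed (use zeta1_less_1 K_pos hmu sigma_nz f_deriv f_nontriv in auto)

lemma growth_rate_real: "Im \<sigma> = 0"
  by (rule robin.eigenvalue_real)

lemma growth_rate_less_max:
  assumes "0 < Re \<sigma>"
  shows "Re \<sigma> < max (F1 / \<mu>i) (max (F2 / \<mu>o)
    (Q / (pi * R20\<^sup>2) * (1 / \<mu>i) * (SUP z\<in>{zeta1 R10 R20<..<1}. \<mu>' z)))"
proof -
  define S where "S = (SUP z\<in>{zeta1 R10 R20<..<1}. \<mu>' z)"
  define M where "M = max (F1 / \<mu>i) (max (F2 / \<mu>o) (Q / (pi * R20\<^sup>2) * (1 / \<mu>i) * S))"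
  have mu'_le: "\<mu>' x \<le> S" if "x \<in> {zeta1 R10 R20..1}" for x
    unfolding S_def using zeta1_less_1 mu'_cont that by (rule continuous_on_le_SUP_greaterThanLessThan)
  have weight_pos: "0 < real n ^ 2 * R20\<^sup>2 / (4 * P x)" if "x \<in> {zeta1 R10 R20..1}" for x
    using P_pos[OF that] hn hR by simp
  have "F1 / \<mu>i \<le> M" "F2 / \<mu>o \<le> M" "Q / (pi * R20\<^sup>2) * (1 / \<mu>i) * S \<le> M"
    unfolding M_def by auto
  then have "F1 \<le> M * \<mu>i" "F2 \<le> M * \<mu>o" "Q * S \<le> M * (pi * R20\<^sup>2 * \<mu>i)"
    using hmu hR by (simp_all add: pos_divide_le_eq mult.commute)
  show ?thesis
  proof (cases "0 < M")
    case True
    have "Q * real n ^ 2 * R20\<^sup>2 / (4 * pi * P x) * \<mu>' x < M * (real n ^ 2 * R20 ^ 4 / (4 * P x) * \<mu> x)"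
      if x: "x \<in> {zeta1 R10 R20..1}" for x
    proof -
      have "Q * \<mu>' x \<le> Q * S" using mu'_le[OF x] hQ by simp
      also have "\<dots> \<le> M * (pi * R20\<^sup>2 * \<mu>i)" by fact
      also have "\<dots> < M * (pi * R20\<^sup>2 * \<mu> x)" using mu_bounds[OF x] True hR by simp
      finally have "real n ^ 2 * R20\<^sup>2 / (4 * P x) * (Q * \<mu>' x / pi)
          < real n ^ 2 * R20\<^sup>2 / (4 * P x) * (M * R20\<^sup>2 * \<mu> x)"
        by (intro mult_strict_left_mono weight_pos x) (simp add: field_simps)
      then show ?thesis by (simp add: field_simps power4_eq_xxxx power2_eq_square)
    qed
    then have "Re \<sigma> < M"
      using True K_pos \<open>F1 \<le> M * \<mu>i\<close> \<open>F2 \<le> M * \<mu>o\<close>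
      by (intro robin.eigenvalue_less) (simp_all add: mult_left_mono mult.left_commute)
    then show ?thesis unfolding M_def S_def .
  next
    case False
    have "M * (pi * R20\<^sup>2 * \<mu>i) \<le> 0"
      using False hmu by (simp add: mult_nonpos_nonneg)
    then have "Q * S \<le> 0"
      using \<open>Q * S \<le> _\<close> by linarith
    then have "S \<le> 0"
      using hQ by (simp add: mult_le_0_iff)
    have "Q * real n ^ 2 * R20\<^sup>2 / (4 * pi * P x) * \<mu>' x \<le> 0" if x: "x \<in> {zeta1 R10 R20..1}" for x
      using mu'_le[OF x] P_pos[OF x] \<open>S \<le> 0\<close> hQ by (intro mult_nonneg_nonpos) auto
    moreover have "F1 \<le> 0" "F2 \<le> 0"
      using False hmu \<open>F1 \<le> M * \<mu>i\<close> \<open>F2 \<le> M * \<mu>o\<close>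
      by (smt (verit) mult_nonpos_nonneg)+
    ultimately have "Re \<sigma> \<le> 0"
      using K_pos by (intro robin.eigenvalue_nonpos) (auto simp: mult_nonneg_nonpos)
    then show ?thesis using assms by simp
  qed
qed

lemma F1_div_eq: "F1 / \<mu>i = Q * real n / (2 * pi * Rsq Q \<tau> R10) * (\<mu> (zeta1 R10 R20) - \<mu>i) / \<mu>i
    - T1 / \<mu>i * (real n ^ 3 - real n) / sqrt (Rsq Q \<tau> R10) ^ 3"
  by (simp add: F1_def diff_divide_distrib)

lemma F2_div_eq: "F2 / \<mu>o = Q * real n / (2 * pi * Rsq Q \<tau> R20) * (\<mu>o - \<mu> 1) / \<mu>o
    - T2 / \<mu>o * (real n ^ 3 - real n) / sqrt (Rsq Q \<tau> R20) ^ 3"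
  by (simp add: F2_def diff_divide_distrib)

lemma F1_div_le: "F1 / \<mu>i \<le> 2 * T1 / (\<mu>i * sqrt (Rsq Q \<tau> R10) ^ 3)
    * (Q * sqrt (Rsq Q \<tau> R10) / (6 * pi * T1) * (\<mu> (zeta1 R10 R20) - \<mu>i) + 1 / 3) powr (3 / 2)"
  unfolding F1_div_eq using hQ hT1 hmu P_pos[of "zeta1 R10 R20"] zeta1_less_1 mu_bounds[of "zeta1 R10 R20"]
  by (intro interfacial_rate_le_max_over_wavenumbers) (auto simp: P_zeta1)

lemma F2_div_le: "F2 / \<mu>o \<le> 2 * T2 / (\<mu>o * sqrt (Rsq Q \<tau> R20) ^ 3)
    * (Q * sqrt (Rsq Q \<tau> R20) / (6 * pi * T2) * (\<mu>o - \<mu> 1) + 1 / 3) powr (3 / 2)"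
  unfolding F2_div_eq using hQ hT2 hmu P_pos[of 1] zeta1_less_1 mu_bounds[of 1]
  by (intro interfacial_rate_le_max_over_wavenumbers) (auto simp: P_1)

end

theorem mainTheorem2:
  fixes Q T1 T2 \<mu>i \<mu>o R10 R20 \<tau> :: real
    and n :: nat
    and \<mu> \<mu>' :: "real \<Rightarrow> real"
    and f f' :: "real \<Rightarrow> complex"
    and \<sigma> :: complex
  assumes hQ: "Q > 0" and hT1: "T1 > 0" and hT2: "T2 > 0"
    and hmu: "0 < \<mu>i" "\<mu>i < \<mu>o"
    and hR: "0 < R10" "R10 < R20"
    and hn: "n > 0"
    and htau: "\<tau> \<ge> 0"
  defines "F1 \<equiv> Q * real n / (2 * pi * Rsq Q \<tau> R10) * (\<mu> (zeta1 R10 R20) - \<mu>i)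
               - T1 * (real n ^ 3 - real n) / sqrt (Rsq Q \<tau> R10) ^ 3"
    and "F2 \<equiv> Q * real n / (2 * pi * Rsq Q \<tau> R20) * (\<mu>o - \<mu> 1)
               - T2 * (real n ^ 3 - real n) / sqrt (Rsq Q \<tau> R20) ^ 3"
  assumes mu_deriv: "\<And>z. z \<in> {zeta1 R10 R20..1} \<Longrightarrow> (\<mu> has_real_derivative \<mu>' z) (at z within {zeta1 R10 R20..1})"
    and mu'_cont: "continuous_on {zeta1 R10 R20..1} \<mu>'"
    and mu_bounds: "\<And>z. z \<in> {zeta1 R10 R20..1} \<Longrightarrow> \<mu>i < \<mu> z \<and> \<mu> z < \<mu>o"
    and sigma_nz: "\<sigma> \<noteq> 0"
    and f_nontriv: "\<exists>z\<in>{zeta1 R10 R20..1}. f z \<noteq> 0"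
    and f_deriv: "\<And>z. z \<in> {zeta1 R10 R20..1} \<Longrightarrow> (f has_vector_derivative f' z) (at z within {zeta1 R10 R20..1})"
    and ode: "\<And>z. z \<in> {zeta1 R10 R20<..<1} \<Longrightarrow>
        ((\<lambda>x. complex_of_real ((x * R20\<^sup>2 + R0sq Q \<tau>) * \<mu> x) * f' x) has_vector_derivative
          (complex_of_real (real n ^ 2 * R20 ^ 4 / (4 * (z * R20\<^sup>2 + R0sq Q \<tau>)) * \<mu> z) * f z
           - complex_of_real (Q * real n ^ 2 * R20\<^sup>2 / (4 * pi * (z * R20\<^sup>2 + R0sq Q \<tau>)))
               * (1 / \<sigma>) * complex_of_real (\<mu>' z) * f z)) (at z)"
    and bc1: "complex_of_real (2 * Rsq Q \<tau> R10 / (real n * R20\<^sup>2) * \<mu> (zeta1 R10 R20)) * f' (zeta1 R10 R20)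
              = (complex_of_real \<mu>i - complex_of_real F1 / \<sigma>) * f (zeta1 R10 R20)"
    and bc2: "- complex_of_real (2 * Rsq Q \<tau> R20 / (real n * R20\<^sup>2) * \<mu> 1) * f' 1
              = (complex_of_real \<mu>o - complex_of_real F2 / \<sigma>) * f 1"
  shows "Im \<sigma> = 0 \<and>
    (Re \<sigma> > 0 \<longrightarrow>
      Re \<sigma> < Max {Q * real n / (2 * pi * Rsq Q \<tau> R10) * (\<mu> (zeta1 R10 R20) - \<mu>i) / \<mu>i
                     - T1 / \<mu>i * (real n ^ 3 - real n) / sqrt (Rsq Q \<tau> R10) ^ 3,
                   Q * real n / (2 * pi * Rsq Q \<tau> R20) * (\<mu>o - \<mu> 1) / \<mu>o
                     - T2 / \<mu>o * (real n ^ 3 - real n) / sqrt (Rsq Q \<tau> R20) ^ 3,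
                   Q / (pi * R20\<^sup>2) * (1 / \<mu>i) * (SUP z\<in>{zeta1 R10 R20<..<1}. \<mu>' z)}
      \<and> Re \<sigma> < Max {2 * T1 / (\<mu>i * sqrt (Rsq Q \<tau> R10) ^ 3)
                       * (Q * sqrt (Rsq Q \<tau> R10) / (6 * pi * T1) * (\<mu> (zeta1 R10 R20) - \<mu>i) + 1 / 3) powr (3 / 2),
                     2 * T2 / (\<mu>o * sqrt (Rsq Q \<tau> R20) ^ 3)
                       * (Q * sqrt (Rsq Q \<tau> R20) / (6 * pi * T2) * (\<mu>o - \<mu> 1) + 1 / 3) powr (3 / 2),
                     Q / (pi * R20\<^sup>2) * (1 / \<mu>i) * (SUP z\<in>{zeta1 R10 R20<..<1}. \<mu>' z)})"
proof -
  interpret three_layer_eigenproblem Q T1 T2 \<mu>i \<mu>o R10 R20 \<tau> n \<mu> \<mu>' f f' \<sigma> F1 F2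
    using assms by unfold_locales (simp_all add: F1_def F2_def)
  show ?thesis
    using growth_rate_real growth_rate_less_max F1_div_le F2_div_le
    unfolding F1_div_eq F2_div_eq by auto
qed

end
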